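(* Let $m$ be a positive integer and let $e$ be an integer with $1\le e\le 3^m-2$. If the monomial $x^e$ is APN or planar over $\mathrm{GF}(3^m)$, then: $e$ is even; $\gcd(e,3^m-1)=2$; $\ell_e=|C_e|=m$; and $e\notin C_1$.
   Context: A function $f:\mathrm{GF}(q)\to\mathrm{GF}(q)$ is almost perfect nonlinear (APN) if $\max_{a\in\mathrm{GF}(q)^*}\max_{b\in\mathrm{GF}(q)}|\{x\in\mathrm{GF}(q): f(x+a)-f(x)=b\}|=2$, and planar (perfect nonlinear) if this maximum equals $1$. For $n=3^m-1$ and $j\in\mathbb{Z}_n$, $C_j=\{j,3j,\dots,3^{\ell_j-1}j\}$ (mod $n$) is the $3$-cyclotomic coset modulo $n$ containing $j$, where $\ell_j$ is the smallest positive integer with $3^{\ell_j}j\equiv j\pmod n$. *)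

theory Defs
  imports Main
begin

definition delta_count :: "('a::{field,finite} \<Rightarrow> 'a) \<Rightarrow> 'a \<Rightarrow> 'a \<Rightarrow> nat" where
  "delta_count f a b = card {x. f (x + a) - f x = b}"

definition diff_unif :: "('a::{field,finite} \<Rightarrow> 'a) \<Rightarrow> nat" where
  "diff_unif f = Max {delta_count f a b | a b. a \<noteq> 0}"

definition APN :: "('a::{field,finite} \<Rightarrow> 'a) \<Rightarrow> bool" where
  "APN f \<longleftrightarrow> diff_unif f = 2"

definition planar :: "('a::{field,finite} \<Rightarrow> 'a) \<Rightarrow> bool" where
  "planar f \<longleftrightarrow> diff_unif f = 1"

definition cyc_coset :: "nat \<Rightarrow> nat \<Rightarrow> nat set" where
  "cyc_coset n j = {(3 ^ i * j) mod n | i. True}"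

definition cyc_ell :: "nat \<Rightarrow> nat \<Rightarrow> nat" where
  "cyc_ell n j = (LEAST l. 0 < l \<and> (3 ^ l * j) mod n = j mod n)"

end

theory Submission
  imports Defs "HOL-Number_Theory.Number_Theory" "HOL-Computational_Algebra.Polynomial"
begin

text \<open>
  Over \<open>GF(3^m)\<close> we have \<open>2 = -1\<close>, so for odd \<open>e\<close> the three points \<open>0, 1, -1\<close> all solve
  \<open>(x+1)^e - x^e = 1\<close>, exceeding differential uniformity 2; hence \<open>e\<close> is even.
  The map \<open>y \<mapsto> 1/(y-1)\<close> sends the \<open>e\<close>-th roots of unity other than 1 to solutions
  of \<open>(x+1)^e = x^e\<close>, and there are at least \<open>gcd(e, 3^m-1)\<close> such roots of unity, so this
  gcd is at most 3, hence exactly 2. Then \<open>3^l e \<equiv> e\<close> modulo \<open>3^m - 1\<close> would force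
  \<open>(3^m-1)/2\<close> to divide \<open>3^l - 1\<close>, impossible for \<open>0 < l < m\<close>; this fixes \<open>\<ell>_e\<close> and \<open>|C_e|\<close>,
  and \<open>e \<notin> C_1\<close> because every element of \<open>C_1\<close> is coprime to \<open>3^m - 1\<close>.
\<close>

lemma delta_count_le_diff_unif:
  fixes f :: "'a::{field,finite} \<Rightarrow> 'a"
  assumes "a \<noteq> 0"
  shows "delta_count f a b \<le> diff_unif f"
proof -
  have "{delta_count f a b | a b. a \<noteq> 0} \<subseteq> (\<lambda>(a, b). delta_count f a b) ` UNIV"
    by auto
  hence "finite {delta_count f a b | a b. a \<noteq> 0}"
    by (rule finite_subset) simp
  thus ?thesis
    unfolding diff_unif_def using assms by (intro Max_ge) auto
qed

lemma delta_count_le_2_if_APN_or_planar: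
  fixes f :: "'a::{field,finite} \<Rightarrow> 'a"
  assumes "APN f \<or> planar f" and "a \<noteq> 0"
  shows "delta_count f a b \<le> 2"
  using delta_count_le_diff_unif[OF assms(2), of f b] assms(1)
  unfolding APN_def planar_def by auto

lemma CHAR_eq_if_card_eq_prime_power:
  fixes p :: nat
  assumes "prime p" and "card (UNIV :: 'a::{field,finite} set) = p ^ m"
  shows "CHAR('a) = p"
proof -
  have "prime CHAR('a)"
    by (intro prime_CHAR_semidom finite_imp_CHAR_pos) simp
  moreover have "CHAR('a) dvd p ^ m"
    using CHAR_dvd_CARD[where 'a = 'a] assms(2) by simp
  ultimately show ?thesis
    using assms(1) by (metis prime_dvd_power primes_dvd_imp_eq)
qed

lemma power_card_minus_one_eq_1:
  fixes x :: "'a::{field,finite}"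
  assumes "x \<noteq> 0"
  shows "x ^ (card (UNIV :: 'a set) - 1) = 1"
proof -
  let ?U = "UNIV - {0::'a}"
  have "x ^ card ?U * \<Prod>?U = (\<Prod>y\<in>?U. x * y)"
    by (simp add: prod.distrib)
  also have "\<dots> = \<Prod>?U"
    by (rule prod.reindex_bij_witness[of _ "\<lambda>y. y / x" "\<lambda>y. x * y"]) (use assms in auto)
  finally show ?thesis
    by (simp add: card_Diff_singleton)
qed

lemma two_le_card_field: "2 \<le> card (UNIV :: 'a::{field,finite} set)"
proof -
  have "card {0::'a, 1} \<le> card (UNIV :: 'a set)"
    by (rule card_mono) simp_all
  thus ?thesis by simp
qed

lemma card_nonzero_powers_le:
  fixes d :: nat
  assumes "d dvd card (UNIV :: 'a::{field,finite} set) - 1"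
  shows "card ((\<lambda>y::'a. y ^ d) ` (UNIV - {0})) \<le> (card (UNIV :: 'a set) - 1) div d"
proof -
  define r where "r = (card (UNIV :: 'a set) - 1) div d"
  have qr: "card (UNIV :: 'a set) - 1 = d * r"
    using assms unfolding r_def by simp
  hence "r > 0"
    using two_le_card_field[where 'a = 'a] by (cases r) auto
  have nonzero: "monom (1::'a) r - 1 \<noteq> 0"
  proof
    assume "monom (1::'a) r - 1 = 0"
    hence "coeff (monom (1::'a) r - 1) r = 0" by simp
    thus False using \<open>r > 0\<close> by (simp add: coeff_monom)
  qed
  have "(\<lambda>y::'a. y ^ d) ` (UNIV - {0}) \<subseteq> {z. poly (monom 1 r - 1) z = 0}"
  proof clarify
    fix y :: 'a assume "y \<noteq> 0"
    hence "(y ^ d) ^ r = 1"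
      using power_card_minus_one_eq_1 qr by (metis power_mult)
    thus "poly (monom 1 r - 1) (y ^ d) = 0"
      by (simp add: poly_monom)
  qed
  hence "card ((\<lambda>y::'a. y ^ d) ` (UNIV - {0})) \<le> card {z. poly (monom (1::'a) r - 1) z = 0}"
    by (intro card_mono) simp_all
  also have "\<dots> \<le> degree (monom (1::'a) r - 1)"
    using nonzero by (rule card_poly_roots_bound)
  also have "\<dots> \<le> r"
    by (metis degree_diff_le degree_monom_le degree_1 le0)
  finally show ?thesis unfolding r_def .
qed

lemma card_power_fibre_eq_card_roots_of_unity:
  fixes y0 :: "'a::field"
  assumes "y0 \<noteq> 0" and "d > 0"
  shows "card {x. x \<noteq> 0 \<and> x ^ d = y0 ^ d} = card {y::'a. y ^ d = 1}"
proof (rule bij_betw_same_card[of "\<lambda>x. x / y0"], rule bij_betw_byWitness[of _ "\<lambda>y. y * y0"])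
  show "(\<lambda>x. x / y0) ` {x. x \<noteq> 0 \<and> x ^ d = y0 ^ d} \<subseteq> {y. y ^ d = 1}"
    using assms by (auto simp: power_divide)
  show "(\<lambda>y. y * y0) ` {y. y ^ d = 1} \<subseteq> {x. x \<noteq> 0 \<and> x ^ d = y0 ^ d}"
    using assms by (auto simp: power_mult_distrib power_0_left)
qed (use assms in auto)

lemma card_roots_of_unity_ge:
  fixes d :: nat
  assumes "d > 0" and "d dvd card (UNIV :: 'a::{field,finite} set) - 1"
  shows "d \<le> card {y::'a. y ^ d = 1}"
proof -
  \<comment> \<open>Each fibre of \<open>y \<mapsto> y^d\<close> on the nonzero elements is a coset of the \<open>d\<close>-th roots of
      unity, and there are at most \<open>(q-1)/d\<close> fibres.\<close>
  let ?U = "UNIV - {0::'a}" and ?K = "{y::'a. y ^ d = 1}"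
  let ?P = "(\<lambda>y. y ^ d) ` ?U"
  have "card (UNIV :: 'a set) - 1 = card ?U"
    by (simp add: card_Diff_singleton)
  also have "\<dots> = (\<Sum>z\<in>?P. card {x \<in> ?U. x ^ d = z})"
    using sum.image_gen[of ?U "\<lambda>_. 1::nat" "\<lambda>y. y ^ d"] by simp
  also have "\<dots> = (\<Sum>z\<in>?P. card ?K)"
    using card_power_fibre_eq_card_roots_of_unity[OF _ \<open>d > 0\<close>]
    by (intro sum.cong) auto
  also have "\<dots> = card ?P * card ?K"
    by simp
  also have "\<dots> \<le> (card (UNIV :: 'a set) - 1) div d * card ?K"
    using card_nonzero_powers_le[OF assms(2)] by simp
  finally have "d * ((card (UNIV :: 'a set) - 1) div d) \<le> (card (UNIV :: 'a set) - 1) div d * card ?K"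
    using assms(2) by simp
  moreover have "(card (UNIV :: 'a set) - 1) div d > 0"
    using assms two_le_card_field[where 'a = 'a] by (simp add: dvd_imp_le div_greater_zero_iff)
  ultimately show ?thesis
    by (simp add: mult.commute)
qed

lemma card_roots_of_unity_le_Suc_delta_count:
  "card {y::'a::{field,finite}. y ^ e = 1} \<le> Suc (delta_count (\<lambda>x::'a. x ^ e) 1 0)"
proof -
  let ?K = "{y::'a. y ^ e = 1}" and ?\<iota> = "\<lambda>y::'a. 1 / (y - 1)"
  have "?\<iota> ` (?K - {1}) \<subseteq> {x. (x + 1) ^ e - x ^ e = 0}"
  proof clarify
    fix y :: 'a assume "y ^ e = 1" "y \<noteq> 1"
    moreover have "1 / (y - 1) + 1 = y / (y - 1)"
      using \<open>y \<noteq> 1\<close> by (simp add: field_simps)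
    ultimately show "(1 / (y - 1) + 1) ^ e - (1 / (y - 1)) ^ e = 0"
      by (simp add: power_divide)
  qed
  hence "card (?\<iota> ` (?K - {1})) \<le> delta_count (\<lambda>x::'a. x ^ e) 1 0"
    unfolding delta_count_def by (rule card_mono[rotated]) simp
  moreover have "inj_on ?\<iota> (?K - {1})"
    by (rule inj_onI) simp
  moreover have "card ?K \<le> Suc (card (?K - {1}))"
    by (cases "(1::'a) \<in> ?K") (simp_all add: card_Diff_singleton)
  ultimately show ?thesis
    by (simp add: card_image)
qed

lemma gcd_card_minus_one_le_Suc_delta_count:
  fixes e :: nat
  assumes "e > 0"
  shows "gcd e (card (UNIV :: 'a::{field,finite} set) - 1) \<le> Suc (delta_count (\<lambda>x::'a. x ^ e) 1 0)"
proof -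
  let ?g = "gcd e (card (UNIV :: 'a set) - 1)"
  have "?g \<le> card {y::'a. y ^ ?g = 1}"
    using assms by (intro card_roots_of_unity_ge) simp_all
  also have "\<dots> \<le> card {y::'a. y ^ e = 1}"
  proof (intro card_mono subsetI)
    obtain k where k: "e = ?g * k"
      using gcd_dvd1 by blast
    show "y \<in> {y. y ^ e = 1}" if "y \<in> {y::'a. y ^ ?g = 1}" for y
      using that arg_cong[OF k, of "(^) y"] by (simp add: power_mult)
  qed simp
  also have "\<dots> \<le> Suc (delta_count (\<lambda>x::'a. x ^ e) 1 0)"
    by (rule card_roots_of_unity_le_Suc_delta_count)
  finally show ?thesis .
qed

lemma three_le_delta_count_if_odd:
  assumes "CHAR('a::{field,finite}) = 3" and "odd e"
  shows "3 \<le> delta_count (\<lambda>x::'a. x ^ e) 1 1"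
proof -
  have "(2::'a) + 1 = 0"
    using of_nat_CHAR[where 'a = 'a] assms(1) by simp
  hence two: "(2::'a) = -1"
    by (simp add: eq_neg_iff_add_eq_0)
  have "(-1::'a) ^ e = -1"
    using assms(2) by simp
  hence "{0, 1, -1} \<subseteq> {x::'a. (x + 1) ^ e - x ^ e = 1}"
  proof clarify
    fix x :: 'a assume "x \<in> {0, 1, -1}"
    thus "(x + 1) ^ e - x ^ e = 1"
      using \<open>(-1::'a) ^ e = -1\<close> odd_pos[OF assms(2)] by (auto simp: two)
  qed
  moreover have "(1::'a) \<noteq> -1"
  proof
    assume "(1::'a) = -1"
    hence "(2::'a) = 0"
      by (simp add: eq_neg_iff_add_eq_0 one_add_one)
    thus False
      using two by simp
  qed
  hence "card {0::'a, 1, -1} = 3"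
    by simp
  ultimately show ?thesis
    unfolding delta_count_def by (metis card_mono finite)
qed

lemma div_gcd_dvd_if_dvd_mult:
  fixes n e k :: nat
  assumes "n dvd e * k" and "n > 0"
  shows "n div gcd e n dvd k"
proof -
  let ?g = "gcd e n"
  have "?g * (n div ?g) dvd ?g * (e div ?g * k)"
    using assms(1) by (simp add: mult.assoc[symmetric])
  moreover have "?g > 0"
    using assms(2) by simp
  ultimately have "n div ?g dvd e div ?g * k"
    by (simp only: nat_mult_dvd_cancel1)
  moreover have "coprime (n div ?g) (e div ?g)"
    using div_gcd_coprime[of n e] assms(2) by (simp add: gcd.commute)
  ultimately show ?thesis
    using coprime_dvd_mult_right_iff by blast
qed

lemma cong_power_3_mult_iff_dvd:
  fixes e n :: nat
  shows "[3 ^ l * e = e] (mod n) \<longleftrightarrow> n dvd e * (3 ^ l - 1)"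
  by (simp add: cong_altdef_nat algebra_simps diff_mult_distrib2)

lemma not_cong_power_3_mult_if_gcd_eq_2:
  fixes e m l :: nat
  assumes "gcd e (3 ^ m - 1) = 2" and "0 < l" and "l < m"
  shows "\<not> [3 ^ l * e = e] (mod 3 ^ m - 1)"
proof
  let ?n = "3 ^ m - 1 :: nat"
  assume "[3 ^ l * e = e] (mod ?n)"
  hence "?n div 2 dvd 3 ^ l - 1"
    using assms div_gcd_dvd_if_dvd_mult[of ?n e "3 ^ l - 1"] one_less_power[of "3::nat" m]
    by (simp add: cong_power_3_mult_iff_dvd)
  moreover have l: "(3::nat) ^ l > 1"
    using assms(2) one_less_power[of "3::nat" l] by simp
  ultimately have "?n div 2 \<le> 3 ^ l - 1"
    by (simp add: dvd_imp_le)
  moreover have "even ?n"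
    by simp
  then obtain k where "?n = 2 * k" ..
  moreover have "(3::nat) ^ m \<ge> 3 * 3 ^ l"
    using power_increasing[of "Suc l" m "3::nat"] assms(3) by simp
  ultimately show False
    using l by auto
qed

lemma coprime_3_power_pred:
  fixes m :: nat
  assumes "m > 0"
  shows "coprime 3 (3 ^ m - 1 :: nat)"
proof -
  have "coprime (3 ^ m) (3 ^ m - 1 :: nat)"
    by (rule coprime_diff_one_right_nat) simp
  thus ?thesis
    using assms by (simp only: coprime_power_left_iff) simp
qed

lemma cong_power_3_mod_period:
  fixes e m i :: nat
  assumes "m > 0"
  shows "[3 ^ i * e = 3 ^ (i mod m) * e] (mod 3 ^ m - 1)"
proof -
  have "[3 ^ m = 1] (mod 3 ^ m - 1 :: nat)"
    by (simp add: cong_altdef_nat)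
  hence "[(3 ^ m) ^ (i div m) * (3 ^ (i mod m) * e) = 1 ^ (i div m) * (3 ^ (i mod m) * e)]
      (mod 3 ^ m - 1 :: nat)"
    by (intro cong_scalar_right cong_pow)
  moreover have "(3::nat) ^ i = (3 ^ m) ^ (i div m) * 3 ^ (i mod m)"
    by (metis div_mult_mod_eq power_add power_mult mult.commute)
  ultimately show ?thesis
    by (simp add: mult.assoc)
qed

lemma cyc_coset_eq_image:
  fixes e m :: nat
  assumes "m > 0"
  shows "cyc_coset (3 ^ m - 1) e = (\<lambda>i. (3 ^ i * e) mod (3 ^ m - 1)) ` {..<m}"
proof -
  have "\<exists>j<m. (3 ^ i * e) mod (3 ^ m - 1) = (3 ^ j * e) mod (3 ^ m - 1)" for i
    using cong_power_3_mod_period[OF assms, of i e] assms unfolding cong_def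
    by (intro exI[of _ "i mod m"]) simp
  thus ?thesis
    unfolding cyc_coset_def by auto
qed

lemma cyc_ell_eq_if_no_shorter_period:
  fixes e m :: nat
  assumes "m > 0" and "\<And>l. 0 < l \<Longrightarrow> l < m \<Longrightarrow> \<not> [3 ^ l * e = e] (mod 3 ^ m - 1)"
  shows "cyc_ell (3 ^ m - 1) e = m"
  unfolding cyc_ell_def
proof (rule Least_equality)
  show "0 < m \<and> (3 ^ m * e) mod (3 ^ m - 1) = e mod (3 ^ m - 1)"
    using assms(1) cong_power_3_mod_period[OF assms(1), of m e] unfolding cong_def by simp
  show "m \<le> l" if "0 < l \<and> (3 ^ l * e) mod (3 ^ m - 1) = e mod (3 ^ m - 1)" for l
    using that assms(2)[of l] unfolding cong_def by (meson not_less)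
qed

lemma card_cyc_coset_eq_if_no_shorter_period:
  fixes e m :: nat
  assumes "m > 0" and "\<And>l. 0 < l \<Longrightarrow> l < m \<Longrightarrow> \<not> [3 ^ l * e = e] (mod 3 ^ m - 1)"
  shows "card (cyc_coset (3 ^ m - 1) e) = m"
proof -
  have "i = j" if "i \<le> j" "j < m" "[3 ^ i * e = 3 ^ j * e] (mod 3 ^ m - 1)" for i j
  proof (rule ccontr)
    assume "i \<noteq> j"
    have "coprime (3 ^ i) (3 ^ m - 1 :: nat)"
      using coprime_3_power_pred[OF assms(1)] by simp
    moreover have "[3 ^ i * e = 3 ^ i * (3 ^ (j - i) * e)] (mod 3 ^ m - 1)"
      using that by (simp add: power_add[symmetric] mult.assoc[symmetric])
    ultimately have "[3 ^ (j - i) * e = e] (mod 3 ^ m - 1)"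
      by (simp add: cong_mult_lcancel_nat cong_sym)
    moreover have "0 < j - i" and "j - i < m"
      using that \<open>i \<noteq> j\<close> by auto
    ultimately show False
      using assms(2) by blast
  qed
  hence "inj_on (\<lambda>i. (3 ^ i * e) mod (3 ^ m - 1)) {..<m}"
    unfolding inj_on_def cong_def by (metis lessThan_iff nat_le_linear)
  thus ?thesis
    using cyc_coset_eq_image[OF assms(1)] by (simp add: card_image)
qed

lemma coprime_if_mem_cyc_coset_1:
  fixes x m :: nat
  assumes "m > 0" and "x \<in> cyc_coset (3 ^ m - 1) 1"
  shows "coprime x (3 ^ m - 1)"
proof -
  obtain i where "x = 3 ^ i mod (3 ^ m - 1)"
    using assms(2) unfolding cyc_coset_def by auto
  moreover have "coprime (3 ^ i) (3 ^ m - 1 :: nat)"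
    using coprime_3_power_pred[OF assms(1)] by simp
  moreover have "3 ^ m - 1 \<noteq> (0::nat)"
    using one_less_power[of "3::nat" m] assms(1) by simp
  ultimately show ?thesis
    by (simp add: coprime_mod_left_iff)
qed

theorem lemma2:
  fixes m e :: nat
  assumes card: "card (UNIV :: 'a set) = 3 ^ m"
    and m: "1 \<le> m"
    and e: "1 \<le> e" "e \<le> 3 ^ m - 2"
    and f: "APN (\<lambda>x::'a::{field,finite}. x ^ e) \<or> planar (\<lambda>x::'a. x ^ e)"
  shows "even e \<and> gcd e (3 ^ m - 1) = 2 \<and> cyc_ell (3 ^ m - 1) e = m
         \<and> card (cyc_coset (3 ^ m - 1) e) = m \<and> e \<notin> cyc_coset (3 ^ m - 1) 1"
proof -
  have \<delta>: "delta_count (\<lambda>x::'a. x ^ e) a b \<le> 2" if "a \<noteq> 0" for a b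
    using f that by (rule delta_count_le_2_if_APN_or_planar)
  have "CHAR('a) = 3"
    using card by (intro CHAR_eq_if_card_eq_prime_power) simp_all
  hence "even e"
    using three_le_delta_count_if_odd \<delta>[of 1 1] by fastforce
  have "gcd e (3 ^ m - 1) = 2"
  proof -
    define g where "g = gcd e (3 ^ m - 1)"
    have "g \<le> 3"
      using gcd_card_minus_one_le_Suc_delta_count[of e, where 'a = 'a] \<delta>[of 1 0] card e(1)
      unfolding g_def by simp
    moreover have "even g" and "g > 0"
      using \<open>even e\<close> e(1) unfolding g_def by simp_all
    ultimately show ?thesis
      unfolding g_def[symmetric] by presburger
  qed
  moreover have "m > 0"
    using m by simp
  moreover have "e \<notin> cyc_coset (3 ^ m - 1) 1"
  proof
    assume "e \<in> cyc_coset (3 ^ m - 1) 1"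
    hence "coprime e (3 ^ m - 1)"
      by (rule coprime_if_mem_cyc_coset_1[OF \<open>m > 0\<close>])
    thus False
      using \<open>gcd e (3 ^ m - 1) = 2\<close> by (simp only: coprime_iff_gcd_eq_1)
  qed
  ultimately show ?thesis
    using \<open>even e\<close> not_cong_power_3_mult_if_gcd_eq_2[of e m]
      cyc_ell_eq_if_no_shorter_period[of m e] card_cyc_coset_eq_if_no_shorter_period[of m e]
    by blast
qed

end
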